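(* Let $X$ be a super $X$-set parameter, let $G$ be a graph, and let $R\subseteq V(G)$. Define $\nu_R$ on the $X$-sets of $G$ by $\nu_R(S)=S\ominus R$. Then $\nu_R$ is a graph automorphism of $\mathfrak{X}(G)$ if and only if $R$ is $X$-irrelevant.
   Context: All graphs are finite, simple, undirected, with nonempty vertex set. A super $X$-set parameter $X$ assigns to each graph $G$ a family of subsets of $V(G)$, called the $X$-sets of $G$, such that: every graph isomorphism maps $X$-sets to $X$-sets; every graph has at least one $X$-set; and (Superset) if $S$ is an $X$-set of $G$ and $S\subseteq S'\subseteq V(G)$, then $S'$ is an $X$-set of $G$. The $X$-TAR graph $\mathfrak{X}(G)$ has as vertices the $X$-sets of $G$, with $S_1S_2$ an edge iff $|S_1\ominus S_2|=1$; $\ominus$ is symmetric difference. A vertex $v$ is $X$-irrelevant if $v$ belongs to no minimal (w.r.t. inclusion) $X$-set of $G$; a set $R$ is $X$-irrelevant if each of its vertices is. *)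

theory Defs
  imports Main
begin

definition is_graph :: "'a set \<Rightarrow> 'a set set \<Rightarrow> bool" where
  "is_graph V E \<longleftrightarrow> finite V \<and> V \<noteq> {} \<and>
     (\<forall>e\<in>E. \<exists>u v. e = {u, v} \<and> u \<in> V \<and> v \<in> V \<and> u \<noteq> v)"

definition graph_iso :: "('a \<Rightarrow> 'b) \<Rightarrow> 'a set \<Rightarrow> 'a set set \<Rightarrow> 'b set \<Rightarrow> 'b set set \<Rightarrow> bool" where
  "graph_iso f V1 E1 V2 E2 \<longleftrightarrow> bij_betw f V1 V2 \<and>
     (\<forall>u\<in>V1. \<forall>v\<in>V1. {u, v} \<in> E1 \<longleftrightarrow> {f u, f v} \<in> E2)"

definition graph_automorphism :: "('a \<Rightarrow> 'a) \<Rightarrow> 'a set \<Rightarrow> 'a set set \<Rightarrow> bool" where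
  "graph_automorphism f V E \<longleftrightarrow> graph_iso f V E V E"

definition symdiff :: "'a set \<Rightarrow> 'a set \<Rightarrow> 'a set" where
  "symdiff A B = (A - B) \<union> (B - A)"

text \<open>A super X-set parameter on graphs with vertices of type 'a:
  X V E is the family of X-sets of the graph (V,E).\<close>
definition super_X_param :: "('a set \<Rightarrow> 'a set set \<Rightarrow> 'a set set) \<Rightarrow> bool" where
  "super_X_param X \<longleftrightarrow>
     (\<forall>V E. is_graph V E \<longrightarrow> X V E \<subseteq> Pow V \<and> X V E \<noteq> {}) \<and>
     (\<forall>V E S S'. is_graph V E \<longrightarrow> S \<in> X V E \<longrightarrow> S \<subseteq> S' \<longrightarrow> S' \<subseteq> V \<longrightarrow> S' \<in> X V E) \<and>
     (\<forall>V1 E1 V2 E2 f S. is_graph V1 E1 \<longrightarrow> is_graph V2 E2 \<longrightarrow> graph_iso f V1 E1 V2 E2 \<longrightarrow>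
        S \<in> X V1 E1 \<longrightarrow> f ` S \<in> X V2 E2)"

definition tar_vertices :: "('a set \<Rightarrow> 'a set set \<Rightarrow> 'a set set) \<Rightarrow> 'a set \<Rightarrow> 'a set set \<Rightarrow> 'a set set" where
  "tar_vertices X V E = X V E"

definition tar_edges :: "('a set \<Rightarrow> 'a set set \<Rightarrow> 'a set set) \<Rightarrow> 'a set \<Rightarrow> 'a set set \<Rightarrow> 'a set set set" where
  "tar_edges X V E = {{S1, S2} | S1 S2. S1 \<in> X V E \<and> S2 \<in> X V E \<and> card (symdiff S1 S2) = 1}"

definition minimal_X_set :: "('a set \<Rightarrow> 'a set set \<Rightarrow> 'a set set) \<Rightarrow> 'a set \<Rightarrow> 'a set set \<Rightarrow> 'a set \<Rightarrow> bool" where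
  "minimal_X_set X V E S \<longleftrightarrow> S \<in> X V E \<and> (\<forall>T\<in>X V E. T \<subseteq> S \<longrightarrow> T = S)"

definition X_irrelevant_vertex :: "('a set \<Rightarrow> 'a set set \<Rightarrow> 'a set set) \<Rightarrow> 'a set \<Rightarrow> 'a set set \<Rightarrow> 'a \<Rightarrow> bool" where
  "X_irrelevant_vertex X V E v \<longleftrightarrow> (\<forall>S. minimal_X_set X V E S \<longrightarrow> v \<notin> S)"

definition X_irrelevant_set :: "('a set \<Rightarrow> 'a set set \<Rightarrow> 'a set set) \<Rightarrow> 'a set \<Rightarrow> 'a set set \<Rightarrow> 'a set \<Rightarrow> bool" where
  "X_irrelevant_set X V E R \<longleftrightarrow> (\<forall>v\<in>R. X_irrelevant_vertex X V E v)"

end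

theory Submission
  imports Defs
begin

text \<open>Since X-sets are closed upwards, the X-sets are exactly the supersets (within V) of
  minimal X-sets. Hence S \<mapsto> S \<ominus> R preserves the X-sets iff R misses every minimal X-set:
  if a vertex v \<in> R lies in a minimal X-set M, then M \<union> R is an X-set mapped to M - R,
  a proper subset of M; conversely, toggling R leaves every minimal X-set below S untouched.
  Being an involution that preserves symmetric differences, S \<mapsto> S \<ominus> R is an automorphism
  of the TAR graph as soon as it maps X-sets to X-sets.\<close>

lemma symdiff_commute: "symdiff A B = symdiff B A"
  by (auto simp: symdiff_def)

lemma symdiff_symdiff_cancel_right: "symdiff (symdiff S R) R = S"
  by (auto simp: symdiff_def)

lemma symdiff_symdiff_same_right: "symdiff (symdiff S1 R) (symdiff S2 R) = symdiff S1 S2"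
  by (auto simp: symdiff_def)

lemma doubleton_in_tar_edges_iff:
  assumes "S1 \<in> X V E" "S2 \<in> X V E"
  shows "{S1, S2} \<in> tar_edges X V E \<longleftrightarrow> card (symdiff S1 S2) = 1"
proof
  assume "{S1, S2} \<in> tar_edges X V E"
  then obtain T1 T2 where "{S1, S2} = {T1, T2}" "card (symdiff T1 T2) = 1"
    by (auto simp: tar_edges_def)
  then show "card (symdiff S1 S2) = 1"
    by (auto simp: doubleton_eq_iff symdiff_commute)
qed (use assms in \<open>auto simp: tar_edges_def\<close>)

lemma graph_automorphism_symdiff_tar_iff:
  "graph_automorphism (\<lambda>S. symdiff S R) (tar_vertices X V E) (tar_edges X V E)
     \<longleftrightarrow> (\<forall>S \<in> X V E. symdiff S R \<in> X V E)"
proof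
  assume "graph_automorphism (\<lambda>S. symdiff S R) (tar_vertices X V E) (tar_edges X V E)"
  then show "\<forall>S \<in> X V E. symdiff S R \<in> X V E"
    by (auto simp: graph_automorphism_def graph_iso_def tar_vertices_def bij_betw_def)
next
  assume maps: "\<forall>S \<in> X V E. symdiff S R \<in> X V E"
  then have "bij_betw (\<lambda>S. symdiff S R) (X V E) (X V E)"
    by (intro bij_betw_byWitness[where f' = "\<lambda>S. symdiff S R"])
      (auto simp: symdiff_symdiff_cancel_right)
  with maps show "graph_automorphism (\<lambda>S. symdiff S R) (tar_vertices X V E) (tar_edges X V E)"
    by (simp add: graph_automorphism_def graph_iso_def tar_vertices_def
        doubleton_in_tar_edges_iff symdiff_symdiff_same_right)
qed

lemma X_set_subset:
  "super_X_param X \<Longrightarrow> is_graph V E \<Longrightarrow> S \<in> X V E \<Longrightarrow> S \<subseteq> V"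
  unfolding super_X_param_def by (meson PowD subsetD)

lemma X_set_superset:
  "super_X_param X \<Longrightarrow> is_graph V E \<Longrightarrow> S \<in> X V E \<Longrightarrow> S \<subseteq> S' \<Longrightarrow> S' \<subseteq> V \<Longrightarrow> S' \<in> X V E"
  unfolding super_X_param_def by metis

lemma finite_X_sets:
  assumes "super_X_param X" "is_graph V E"
  shows "finite (X V E)"
proof -
  have "X V E \<subseteq> Pow V"
    using X_set_subset[OF assms] by blast
  moreover have "finite V"
    using assms(2) by (simp add: is_graph_def)
  ultimately show ?thesis
    by (meson finite_Pow_iff finite_subset)
qed

lemma minimal_X_set_below:
  assumes "super_X_param X" "is_graph V E" "S \<in> X V E"
  obtains M where "minimal_X_set X V E M" "M \<subseteq> S"
  using finite_has_minimal2[OF finite_X_sets[OF assms(1,2)] assms(3)]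
  by (auto simp: minimal_X_set_def)

lemma symdiff_X_set_if_X_irrelevant:
  assumes X: "super_X_param X" and G: "is_graph V E" and "R \<subseteq> V"
    and irrelevant: "X_irrelevant_set X V E R" and S: "S \<in> X V E"
  shows "symdiff S R \<in> X V E"
proof -
  obtain M where M: "minimal_X_set X V E M" "M \<subseteq> S"
    using minimal_X_set_below[OF X G S] .
  have "M \<inter> R = {}"
    using irrelevant M(1) by (auto simp: X_irrelevant_set_def X_irrelevant_vertex_def)
  with M(2) have "M \<subseteq> symdiff S R"
    by (auto simp: symdiff_def)
  moreover have "symdiff S R \<subseteq> V"
    using X_set_subset[OF X G S] \<open>R \<subseteq> V\<close> by (auto simp: symdiff_def)
  ultimately show ?thesis
    using X_set_superset[OF X G] M(1) by (auto simp: minimal_X_set_def)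
qed

lemma X_irrelevant_if_symdiff_X_set:
  assumes X: "super_X_param X" and G: "is_graph V E" and "R \<subseteq> V"
    and maps: "\<forall>S \<in> X V E. symdiff S R \<in> X V E"
  shows "X_irrelevant_set X V E R"
  unfolding X_irrelevant_set_def X_irrelevant_vertex_def
proof (intro ballI allI impI notI)
  fix v M
  assume "v \<in> R" "minimal_X_set X V E M" "v \<in> M"
  then have M: "M \<in> X V E" "\<forall>T \<in> X V E. T \<subseteq> M \<longrightarrow> T = M"
    by (auto simp: minimal_X_set_def)
  have "M \<union> R \<in> X V E"
    using X_set_superset[OF X G M(1)] X_set_subset[OF X G M(1)] \<open>R \<subseteq> V\<close> by blast
  with maps have "symdiff (M \<union> R) R \<in> X V E" by blast
  moreover have "symdiff (M \<union> R) R = M - R"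
    by (auto simp: symdiff_def)
  ultimately have "M - R = M"
    using M(2) by blast
  with \<open>v \<in> R\<close> \<open>v \<in> M\<close> show False by blast
qed

theorem theorem2p23:
  fixes X :: "'a set \<Rightarrow> 'a set set \<Rightarrow> 'a set set"
    and V :: "'a set" and E :: "'a set set" and R :: "'a set"
  assumes "super_X_param X"
    and "is_graph V E"
    and "R \<subseteq> V"
  shows "graph_automorphism (\<lambda>S. symdiff S R) (tar_vertices X V E) (tar_edges X V E)
         \<longleftrightarrow> X_irrelevant_set X V E R"
  unfolding graph_automorphism_symdiff_tar_iff
  using symdiff_X_set_if_X_irrelevant[OF assms] X_irrelevant_if_symdiff_X_set[OF assms]
  by blast

end
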